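(* Let $\mathcal{G}$ be an ultragraph and suppose there exists $n\geq1$ such that $X_1,\dots,X_n\neq\emptyset$ and $\big(\bigcup_{e\in\mathcal{G}^1}r(e)\big)\cup s(\mathcal{G}^1)=\bigcup_{i=1}^n(\overline{X_i}\cup I_i)$. Let $R$ be a field, $N$ an $R$-vector space and $\pi:L_R(\mathcal{G})\to\mathrm{Hom}_R(N)$ a representation, and suppose that $N_{r(e)}=\bigoplus_{v\in r(e)}N_v$ for each $e\in\mathcal{G}^1$. Let $M=\pi(L_R(\mathcal{G}))(N)$ and let $\widetilde{\pi}:L_R(\mathcal{G})\to\mathrm{Hom}_R(M)$ be the restriction of $\pi$. If $N_v=\bigoplus_{e\in s^{-1}(v)}N_e$ for each vertex $v$ which is not a sink, then $\widetilde{\pi}$ is equivalent to a representation induced by some $\mathcal{G}$-algebraic branching system.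
   Context: An ultragraph $\mathcal{G}=(G^0,\mathcal{G}^1,r,s)$ consists of sets $G^0$, $\mathcal{G}^1$, a map $s:\mathcal{G}^1\to G^0$ and a map $r:\mathcal{G}^1\to P(G^0)\setminus\{\emptyset\}$. $\mathcal{G}^0$ is the smallest subset of $P(G^0)$ containing $\{v\}$ ($v\in G^0$) and $r(e)$ ($e\in\mathcal{G}^1$), closed under finite unions and intersections; write $p_v=p_{\{v\}}$, $D_v=D_{\{v\}}$. A vertex $v$ is a sink if $s^{-1}(v)=\emptyset$. $L_R(\mathcal{G})$ is the universal $R$-algebra generated by $\{s_e,s_e^*:e\in\mathcal{G}^1\}\cup\{p_A:A\in\mathcal{G}^0\}$ subject to: (1) $p_\emptyset=0$, $p_Ap_B=p_{A\cap B}$, $p_{A\cup B}=p_A+p_B-p_{A\cap B}$; (2) $p_{s(e)}s_e=s_ep_{r(e)}=s_e$, $p_{r(e)}s_e^*=s_e^*p_{s(e)}=s_e^*$; (3) $s_e^*s_f=\delta_{e,f}p_{r(e)}$; (4) $p_v=\sum_{s(e)=v}s_es_e^*$ whenever $0<|s^{-1}(v)|<\infty$. For $\pi$ as in the claim, $N_A=\pi(p_A)(N)$, $N_v=N_{\{v\}}$, $N_e=\pi(s_es_e^* )(N)$. Extreme vertices: for an ultragraph, an extreme vertex is a set $A\in r(\mathcal{G}^1)\cup\{\{s(e)\}:e\in\mathcal{G}^1\}$ such that either $A=r(e)$ for some edge $e$ and $A\cap\bigcup_{f\neq e}r(f)=\emptyset=A\cap s(\mathcal{G}^1)$, or $A=\{s(e)\}$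 for some edge $e$ and $A\cap s(\mathcal{G}^1\setminus\{e\})=\emptyset=A\cap\bigcup_{f\in\mathcal{G}^1}r(f)$; this $e$ is the extreme edge of $A$. The isolated vertices of an ultragraph are the vertices lying in no $r(e)$ and not equal to any $s(e)$. Inductive construction: $I_0$ = isolated vertices of $\mathcal{G}$, $\mathbb{G}_0=(G^0\setminus I_0,\mathcal{G}^1,r,s)$; $X_1,Y_1$ = extreme vertices and extreme edges of $\mathbb{G}_0$, $\overline{X_1}=\bigcup_{A\in X_1}A$; $I_1$ = isolated vertices of $(G^0\setminus(I_0\cup\overline{X_1}),\mathcal{G}^1\setminus Y_1,r,s)$ and $\mathbb{G}_1=(G^0\setminus(I_0\cup I_1\cup\overline{X_1}),\mathcal{G}^1\setminus Y_1,r,s)$. In general, while $X_k\neq\emptyset$, $X_{k+1},Y_{k+1}$ are the extreme vertices and extreme edges of $\mathbb{G}_k$, $\overline{X_{k+1}}=\bigcup_{A\in X_{k+1}}A$, $I_{k+1}$ is the set of isolated vertices of $(G^0\setminus(I_0\cup\dots\cup I_k\cup\overline{X_1}\cup\dots\cup\overline{X_{k+1}}),\mathcal{G}^1\setminus(Y_1\cup\dots\cup Y_{k+1}),r,s)$, and $\mathbb{G}_{k+1}$ is this ultragraph with the vertices of $I_{k+1}$ also removed. A $\mathcal{G}$-algebraic branching system on a set $X$ is a family of subsets $R_e,D_A\subseteq X$ and maps $f_e$ with: (i) $R_e\cap R_f=\emptyset$ for $e\neq f$; (ii) $D_\emptyset=\emptyset$, $D_A\cap D_B=D_{A\cap B}$,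 $D_A\cup D_B=D_{A\cup B}$; (iii) $R_e\subseteq D_{s(e)}$; (iv) $D_v=\bigcup_{e\in s^{-1}(v)}R_e$ whenever $0<|s^{-1}(v)|<\infty$; (v) $f_e:D_{r(e)}\to R_e$ is a bijection. The representation induced by it acts on the $R$-module $M'$ of maps $X\to R$ (all maps, or those with finite support) by $\pi'(s_e)(\phi)(x)=\phi(f_e^{-1}(x))$ for $x\in R_e$ and $0$ otherwise, $\pi'(s_e^* )(\phi)(x)=\phi(f_e(x))$ for $x\in D_{r(e)}$ and $0$ otherwise, $\pi'(p_A)(\phi)=1_{D_A}\phi$. Two representations $\rho:L_R(\mathcal{G})\to\mathrm{Hom}_R(M)$, $\rho':L_R(\mathcal{G})\to\mathrm{Hom}_R(M')$ are equivalent if there is an $R$-module isomorphism $T:M\to M'$ with $T\circ\rho(a)=\rho'(a)\circ T$ for all $a$. *)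

theory Defs
  imports Complex_Main
begin

text \<open>An ultragraph is given by a vertex set G0, an edge set G1, a range map r
  and a source map s (the maps are total functions, only their values on G1 matter).\<close>

definition ultragraph :: "'v set \<Rightarrow> 'e set \<Rightarrow> ('e \<Rightarrow> 'v set) \<Rightarrow> ('e \<Rightarrow> 'v) \<Rightarrow> bool" where
  "ultragraph G0 G1 r s \<longleftrightarrow> (\<forall>e\<in>G1. s e \<in> G0 \<and> r e \<subseteq> G0 \<and> r e \<noteq> {})"

text \<open>The family \<open>\<G>^0\<close>: smallest family containing the singletons, the ranges,
  and closed under finite unions and intersections (the empty union gives the empty set).\<close>

inductive_set gen0 :: "'v set \<Rightarrow> 'e set \<Rightarrow> ('e \<Rightarrow> 'v set) \<Rightarrow> 'v set set"
  for G0 :: "'v set" and G1 :: "'e set" and r :: "'e \<Rightarrow> 'v set" where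
  empty: "{} \<in> gen0 G0 G1 r"
| vert: "v \<in> G0 \<Longrightarrow> {v} \<in> gen0 G0 G1 r"
| rng: "e \<in> G1 \<Longrightarrow> r e \<in> gen0 G0 G1 r"
| un: "A \<in> gen0 G0 G1 r \<Longrightarrow> B \<in> gen0 G0 G1 r \<Longrightarrow> A \<union> B \<in> gen0 G0 G1 r"
| int: "A \<in> gen0 G0 G1 r \<Longrightarrow> B \<in> gen0 G0 G1 r \<Longrightarrow> A \<inter> B \<in> gen0 G0 G1 r"

definition isolated :: "'v set \<Rightarrow> 'e set \<Rightarrow> ('e \<Rightarrow> 'v set) \<Rightarrow> ('e \<Rightarrow> 'v) \<Rightarrow> 'v set" where
  "isolated V E r s = {v \<in> V. v \<notin> (\<Union>e\<in>E. r e) \<and> v \<notin> s ` E}"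

definition extreme :: "'e set \<Rightarrow> ('e \<Rightarrow> 'v set) \<Rightarrow> ('e \<Rightarrow> 'v) \<Rightarrow> 'v set \<Rightarrow> 'e \<Rightarrow> bool" where
  "extreme E r s A e \<longleftrightarrow> e \<in> E \<and>
     ((A = r e \<and> A \<inter> (\<Union>f\<in>E - {e}. r f) = {} \<and> A \<inter> s ` E = {})
    \<or> (A = {s e} \<and> A \<inter> s ` (E - {e}) = {} \<and> A \<inter> (\<Union>f\<in>E. r f) = {}))"

definition extreme_vertices :: "'e set \<Rightarrow> ('e \<Rightarrow> 'v set) \<Rightarrow> ('e \<Rightarrow> 'v) \<Rightarrow> 'v set set" where
  "extreme_vertices E r s = {A. \<exists>e. extreme E r s A e}"

definition extreme_edges :: "'e set \<Rightarrow> ('e \<Rightarrow> 'v set) \<Rightarrow> ('e \<Rightarrow> 'v) \<Rightarrow> 'e set" where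
  "extreme_edges E r s = {e. \<exists>A. extreme E r s A e}"

text \<open>\<open>stage G0 G1 r s k\<close> = (vertex set, edge set) of the ultragraph \<open>\<bbbG>_k\<close>.\<close>
fun stage :: "'v set \<Rightarrow> 'e set \<Rightarrow> ('e \<Rightarrow> 'v set) \<Rightarrow> ('e \<Rightarrow> 'v) \<Rightarrow> nat \<Rightarrow> 'v set \<times> 'e set" where
  "stage G0 G1 r s 0 = (G0 - isolated G0 G1 r s, G1)"
| "stage G0 G1 r s (Suc k) =
     (let V = fst (stage G0 G1 r s k); E = snd (stage G0 G1 r s k);
          V1 = V - \<Union>(extreme_vertices E r s); E1 = E - extreme_edges E r s
      in (V1 - isolated V1 E1 r s, E1))"

text \<open>\<open>Xk \<dots> k\<close> = X_k (for k \<ge> 1), the extreme vertices of \<open>\<bbbG>_{k-1}\<close>.\<close>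
definition Xk :: "'v set \<Rightarrow> 'e set \<Rightarrow> ('e \<Rightarrow> 'v set) \<Rightarrow> ('e \<Rightarrow> 'v) \<Rightarrow> nat \<Rightarrow> 'v set set" where
  "Xk G0 G1 r s k = extreme_vertices (snd (stage G0 G1 r s (k - 1))) r s"

fun Ik :: "'v set \<Rightarrow> 'e set \<Rightarrow> ('e \<Rightarrow> 'v set) \<Rightarrow> ('e \<Rightarrow> 'v) \<Rightarrow> nat \<Rightarrow> 'v set" where
  "Ik G0 G1 r s 0 = isolated G0 G1 r s"
| "Ik G0 G1 r s (Suc k) =
     (let V = fst (stage G0 G1 r s k); E = snd (stage G0 G1 r s k)
      in isolated (V - \<Union>(extreme_vertices E r s)) (E - extreme_edges E r s) r s)"

text \<open>By the universal property of \<open>L_R(\<G>)\<close>, a representation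
  \<open>\<pi> : L_R(\<G>) \<rightarrow> Hom_R(N)\<close> is the same as a family of R-linear maps
  \<open>S e = \<pi>(s_e)\<close>, \<open>Sa e = \<pi>(s_e^*)\<close>, \<open>P A = \<pi>(p_A)\<close> (A \<in> \<G>^0) satisfying relations (1)-(4).\<close>

definition lpa_rep ::
  "('r::field \<Rightarrow> 'n::ab_group_add \<Rightarrow> 'n) \<Rightarrow> 'v set \<Rightarrow> 'e set \<Rightarrow> ('e \<Rightarrow> 'v set) \<Rightarrow> ('e \<Rightarrow> 'v)
   \<Rightarrow> ('e \<Rightarrow> 'n \<Rightarrow> 'n) \<Rightarrow> ('e \<Rightarrow> 'n \<Rightarrow> 'n) \<Rightarrow> ('v set \<Rightarrow> 'n \<Rightarrow> 'n) \<Rightarrow> bool" where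
  "lpa_rep scale G0 G1 r s S Sa P \<longleftrightarrow>
     (\<forall>e\<in>G1. Vector_Spaces.linear scale scale (S e) \<and> Vector_Spaces.linear scale scale (Sa e)) \<and>
     (\<forall>A\<in>gen0 G0 G1 r. Vector_Spaces.linear scale scale (P A)) \<and>
     \<comment> \<open>(1)\<close>
     P {} = (\<lambda>x. 0) \<and>
     (\<forall>A\<in>gen0 G0 G1 r. \<forall>B\<in>gen0 G0 G1 r. P A \<circ> P B = P (A \<inter> B)) \<and>
     (\<forall>A\<in>gen0 G0 G1 r. \<forall>B\<in>gen0 G0 G1 r.
        \<forall>x. P (A \<union> B) x = P A x + P B x - P (A \<inter> B) x) \<and>
     \<comment> \<open>(2)\<close>
     (\<forall>e\<in>G1. P {s e} \<circ> S e = S e \<and> S e \<circ> P (r e) = S e \<and>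
              P (r e) \<circ> Sa e = Sa e \<and> Sa e \<circ> P {s e} = Sa e) \<and>
     \<comment> \<open>(3)\<close>
     (\<forall>e\<in>G1. \<forall>f\<in>G1. Sa e \<circ> S f = (if e = f then P (r e) else (\<lambda>x. 0))) \<and>
     \<comment> \<open>(4)\<close>
     (\<forall>v\<in>G0. 0 < card {e\<in>G1. s e = v} \<longrightarrow>
        (\<forall>x. P {v} x = (\<Sum>e\<in>{e\<in>G1. s e = v}. S e (Sa e x))))"

text \<open>The image \<open>\<pi>(L_R(\<G>))\<close>: the (non-unital) subalgebra of operators generated by the
  images of the generators.\<close>
inductive_set rep_image ::
  "('r::field \<Rightarrow> 'n::ab_group_add \<Rightarrow> 'n) \<Rightarrow> 'v set \<Rightarrow> 'e set \<Rightarrow> ('e \<Rightarrow> 'v set)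
   \<Rightarrow> ('e \<Rightarrow> 'n \<Rightarrow> 'n) \<Rightarrow> ('e \<Rightarrow> 'n \<Rightarrow> 'n) \<Rightarrow> ('v set \<Rightarrow> 'n \<Rightarrow> 'n) \<Rightarrow> ('n \<Rightarrow> 'n) set"
  for scale G0 G1 r S Sa P where
  gen_s: "e \<in> G1 \<Longrightarrow> S e \<in> rep_image scale G0 G1 r S Sa P"
| gen_sa: "e \<in> G1 \<Longrightarrow> Sa e \<in> rep_image scale G0 G1 r S Sa P"
| gen_p: "A \<in> gen0 G0 G1 r \<Longrightarrow> P A \<in> rep_image scale G0 G1 r S Sa P"
| comp: "a \<in> rep_image scale G0 G1 r S Sa P \<Longrightarrow> b \<in> rep_image scale G0 G1 r S Sa P
          \<Longrightarrow> a \<circ> b \<in> rep_image scale G0 G1 r S Sa P"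
| add: "a \<in> rep_image scale G0 G1 r S Sa P \<Longrightarrow> b \<in> rep_image scale G0 G1 r S Sa P
          \<Longrightarrow> (\<lambda>x. a x + b x) \<in> rep_image scale G0 G1 r S Sa P"
| smult: "a \<in> rep_image scale G0 G1 r S Sa P
          \<Longrightarrow> (\<lambda>x. scale c (a x)) \<in> rep_image scale G0 G1 r S Sa P"

definition rep_module where
  "rep_module scale G0 G1 r S Sa P =
     module.span scale {a x |a x. a \<in> rep_image scale G0 G1 r S Sa P}"

definition internal_direct_sum :: "('r::field \<Rightarrow> 'n::ab_group_add \<Rightarrow> 'n) \<Rightarrow> 'n set \<Rightarrow> 'i set \<Rightarrow> ('i \<Rightarrow> 'n set) \<Rightarrow> bool" where
  "internal_direct_sum scale W I F \<longleftrightarrow>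
     W = module.span scale (\<Union>i\<in>I. F i) \<and>
     (\<forall>J w. J \<subseteq> I \<longrightarrow> finite J \<longrightarrow> (\<forall>i\<in>J. w i \<in> F i) \<longrightarrow> (\<Sum>i\<in>J. w i) = 0 \<longrightarrow> (\<forall>i\<in>J. w i = 0))"

definition branching_system ::
  "'v set \<Rightarrow> 'e set \<Rightarrow> ('e \<Rightarrow> 'v set) \<Rightarrow> ('e \<Rightarrow> 'v) \<Rightarrow> 'x set
   \<Rightarrow> ('e \<Rightarrow> 'x set) \<Rightarrow> ('v set \<Rightarrow> 'x set) \<Rightarrow> ('e \<Rightarrow> 'x \<Rightarrow> 'x) \<Rightarrow> bool" where
  "branching_system G0 G1 r s X Rg D f \<longleftrightarrow>
     (\<forall>e\<in>G1. Rg e \<subseteq> X) \<and> (\<forall>A\<in>gen0 G0 G1 r. D A \<subseteq> X) \<and>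
     (\<forall>e\<in>G1. \<forall>e'\<in>G1. e \<noteq> e' \<longrightarrow> Rg e \<inter> Rg e' = {}) \<and>
     D {} = {} \<and>
     (\<forall>A\<in>gen0 G0 G1 r. \<forall>B\<in>gen0 G0 G1 r. D A \<inter> D B = D (A \<inter> B) \<and> D A \<union> D B = D (A \<union> B)) \<and>
     (\<forall>e\<in>G1. Rg e \<subseteq> D {s e}) \<and>
     (\<forall>v\<in>G0. 0 < card {e\<in>G1. s e = v} \<longrightarrow> D {v} = (\<Union>e\<in>{e\<in>G1. s e = v}. Rg e)) \<and>
     (\<forall>e\<in>G1. bij_betw (f e) (D (r e)) (Rg e))"

definition fin_maps :: "'x set \<Rightarrow> ('x \<Rightarrow> 'r::zero) set" where
  "fin_maps X = {\<phi>. (\<forall>x. x \<notin> X \<longrightarrow> \<phi> x = 0) \<and> finite {x. \<phi> x \<noteq> 0}}"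

definition ind_s :: "('e \<Rightarrow> 'x set) \<Rightarrow> ('v set \<Rightarrow> 'x set) \<Rightarrow> ('e \<Rightarrow> 'v set) \<Rightarrow> ('e \<Rightarrow> 'x \<Rightarrow> 'x)
   \<Rightarrow> 'e \<Rightarrow> ('x \<Rightarrow> 'r::zero) \<Rightarrow> ('x \<Rightarrow> 'r)" where
  "ind_s Rg D r f e \<phi> = (\<lambda>x. if x \<in> Rg e then \<phi> (the_inv_into (D (r e)) (f e) x) else 0)"

definition ind_sa :: "('v set \<Rightarrow> 'x set) \<Rightarrow> ('e \<Rightarrow> 'v set) \<Rightarrow> ('e \<Rightarrow> 'x \<Rightarrow> 'x)
   \<Rightarrow> 'e \<Rightarrow> ('x \<Rightarrow> 'r::zero) \<Rightarrow> ('x \<Rightarrow> 'r)" where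
  "ind_sa D r f e \<phi> = (\<lambda>x. if x \<in> D (r e) then \<phi> (f e x) else 0)"

definition ind_p :: "('v set \<Rightarrow> 'x set) \<Rightarrow> 'v set \<Rightarrow> ('x \<Rightarrow> 'r::zero) \<Rightarrow> ('x \<Rightarrow> 'r)" where
  "ind_p D A \<phi> = (\<lambda>x. if x \<in> D A then \<phi> x else 0)"

end

theory Submission
  imports Defs
begin

text \<open>If the extreme vertices and isolated vertices of the first \<open>n\<close> stages cover all sources and
  ranges, every edge is removed at some stage, and ranking edges by their removal stage (and by
  whether their range or their source was extreme) shows that the ultragraph has no infinite
  paths. Choose a basis of \<open>N\<^sub>v\<close> at every sink and push it along paths with the
  operators \<open>s\<^sub>e\<close>: by well-founded recursion and the two direct-sum hypotheses this yields a
  basis \<open>X\<^sub>v\<close> of every \<open>N\<^sub>v\<close>, and their union \<open>X\<close> is a basis of \<open>M\<close>.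
  On \<open>X\<close>, \<open>s\<^sub>e\<close> maps \<open>X\<^bsub>r(e)\<^esub>\<close> bijectively onto \<open>R\<^sub>e = s\<^sub>e(X\<^bsub>r(e)\<^esub>)\<close>, \<open>s\<^sub>e\<^sup>*\<close> inverts
  it, and \<open>p\<^sub>A\<close> fixes \<open>X\<^sub>A\<close> and kills the rest, so taking coordinates in \<open>X\<close> is the
  required equivalence.\<close>

section \<open>Finiteness of paths\<close>

lemma stage_edges_Suc [simp]:
  "snd (stage G0 G1 r s (Suc k)) =
     snd (stage G0 G1 r s k) - extreme_edges (snd (stage G0 G1 r s k)) r s"
  by (simp add: Let_def)

declare stage.simps(2) [simp del]

lemma stage_edges_antimono:
  "j \<le> k \<Longrightarrow> snd (stage G0 G1 r s k) \<subseteq> snd (stage G0 G1 r s j)"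
  by (induction k rule: dec_induct) auto

lemma source_notin_Ik_Suc:
  "e \<in> snd (stage G0 G1 r s (Suc j)) \<Longrightarrow> s e \<notin> Ik G0 G1 r s (Suc j)"
  by (simp add: Let_def isolated_def)

lemma source_notin_Xk_Suc:
  assumes e: "e \<in> snd (stage G0 G1 r s (Suc j))"
  shows "s e \<notin> \<Union>(Xk G0 G1 r s (Suc j))"
proof
  let ?E = "snd (stage G0 G1 r s j)"
  assume "s e \<in> \<Union>(Xk G0 G1 r s (Suc j))"
  then obtain A e' where A: "s e \<in> A" and ext: "extreme ?E r s A e'"
    unfolding Xk_def extreme_vertices_def by auto
  have "e \<in> ?E" "e \<notin> extreme_edges ?E r s"
    using e by simp_all
  then have "e \<noteq> e'"
    using ext unfolding extreme_edges_def by blast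
  with A ext \<open>e \<in> ?E\<close> show False
    unfolding extreme_def by blast
qed

lemma stage_edges_empty_if_cover:
  assumes cover: "(\<Union>e\<in>G1. r e) \<union> s ` G1 = (\<Union>i\<in>{1..n}. \<Union>(Xk G0 G1 r s i) \<union> Ik G0 G1 r s i)"
  shows "snd (stage G0 G1 r s n) = {}"
proof -
  have "e \<notin> snd (stage G0 G1 r s n)" if e: "e \<in> G1" for e
  proof
    assume en: "e \<in> snd (stage G0 G1 r s n)"
    have "s e \<in> (\<Union>i\<in>{1..n}. \<Union>(Xk G0 G1 r s i) \<union> Ik G0 G1 r s i)"
      unfolding cover[symmetric] using e by blast
    then obtain i where i: "i \<in> {1..n}" "s e \<in> \<Union>(Xk G0 G1 r s i) \<union> Ik G0 G1 r s i"
      by blast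
    then obtain j where "i = Suc j"
      by (cases i) simp_all
    with i have j: "Suc j \<le> n" "s e \<in> \<Union>(Xk G0 G1 r s (Suc j)) \<union> Ik G0 G1 r s (Suc j)"
      by auto
    have "e \<in> snd (stage G0 G1 r s (Suc j))"
      using stage_edges_antimono[OF j(1), of G0 G1 r s] en by blast
    then show False
      using j(2) source_notin_Xk_Suc source_notin_Ik_Suc by (metis UnE)
  qed
  moreover have "snd (stage G0 G1 r s n) \<subseteq> G1"
    using stage_edges_antimono[of 0 n] by simp
  ultimately show ?thesis by blast
qed

definition edge_successor :: "'e set \<Rightarrow> ('e \<Rightarrow> 'v set) \<Rightarrow> ('e \<Rightarrow> 'v) \<Rightarrow> ('e \<times> 'e) set" where
  "edge_successor G1 r s = {(f, e). e \<in> G1 \<and> f \<in> G1 \<and> s f \<in> r e}"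

context
  fixes G0 :: "'v set" and G1 :: "'e set" and r :: "'e \<Rightarrow> 'v set" and s :: "'e \<Rightarrow> 'v"
    and n :: nat
  assumes exhausted: "snd (stage G0 G1 r s n) = {}"
begin

definition removal_stage :: "'e \<Rightarrow> nat" where
  "removal_stage e = (LEAST k. e \<notin> snd (stage G0 G1 r s (Suc k)))"

lemma removal_stage_less:
  assumes "e \<in> G1" "e \<notin> snd (stage G0 G1 r s k)"
  shows "removal_stage e < k"
proof (cases k)
  case (Suc j)
  have "removal_stage e \<le> j"
    unfolding removal_stage_def by (rule Least_le) (use assms(2) Suc in blast)
  with Suc show ?thesis by simp
qed (use assms in simp)

lemma removal_stage_less_n: "e \<in> G1 \<Longrightarrow> removal_stage e < n"
  using removal_stage_less exhausted by blast

lemma extreme_at_removal_stage: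
  assumes e: "e \<in> G1"
  shows "e \<in> extreme_edges (snd (stage G0 G1 r s (removal_stage e))) r s"
proof -
  let ?k = "removal_stage e"
  have "e \<notin> snd (stage G0 G1 r s (Suc ?k))"
    unfolding removal_stage_def
    by (rule LeastI[of _ "n - 1"]) (use removal_stage_less_n[OF e] exhausted in simp)
  moreover have "e \<in> snd (stage G0 G1 r s ?k)"
    using removal_stage_less[OF e, of ?k] by blast
  ultimately show ?thesis by simp
qed

definition range_removed :: "'e \<Rightarrow> bool" where
  "range_removed e \<longleftrightarrow> r e \<inter> s ` snd (stage G0 G1 r s (removal_stage e)) = {}"

lemma source_removed:
  assumes "e \<in> G1" "\<not> range_removed e"
  shows "s e \<notin> (\<Union>f\<in>snd (stage G0 G1 r s (removal_stage e)). r f)"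
  using extreme_at_removal_stage[OF assms(1)] assms(2)
  by (auto simp: extreme_edges_def extreme_def range_removed_def)

text \<open>An edge removed at stage \<open>k\<close> as an extreme range gets rank \<open>k < n\<close>, one removed as an
  extreme source gets rank \<open>2n - k > n\<close>. An edge following a range-removed edge was removed
  earlier, an edge preceding a source-removed edge was removed earlier too, so ranks decrease
  along paths.\<close>
definition edge_rank :: "'e \<Rightarrow> nat" where
  "edge_rank e = (if range_removed e then removal_stage e else 2 * n - removal_stage e)"

lemma edge_rank_decreasing:
  assumes e: "e \<in> G1" and f: "f \<in> G1" and sf: "s f \<in> r e"
  shows "edge_rank f < edge_rank e"
proof -
  have "removal_stage f < removal_stage e" if "range_removed e"
    using that sf removal_stage_less[OF f, of "removal_stage e"]
    unfolding range_removed_def by blast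
  moreover have "removal_stage e < removal_stage f" if "\<not> range_removed f"
    using source_removed[OF f that] sf removal_stage_less[OF e, of "removal_stage f"] by blast
  ultimately show ?thesis
    using removal_stage_less_n[OF e] removal_stage_less_n[OF f]
    unfolding edge_rank_def by auto
qed

lemma wf_edge_successor: "wf (edge_successor G1 r s)"
  by (rule wf_subset[OF wf_measure[of edge_rank]])
    (auto simp: edge_successor_def edge_rank_decreasing)

end

section \<open>Bases of internal direct sums\<close>

definition basis_of :: "('a::field \<Rightarrow> 'b::ab_group_add \<Rightarrow> 'b) \<Rightarrow> 'b set \<Rightarrow> 'b set \<Rightarrow> bool" where
  "basis_of scale B W \<longleftrightarrow>
     B \<subseteq> W \<and> \<not> module.dependent scale B \<and> W \<subseteq> module.span scale B"

lemma internal_direct_sum_span: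
  "internal_direct_sum scale W I F \<Longrightarrow> W = module.span scale (\<Union>i\<in>I. F i)"
  unfolding internal_direct_sum_def by blast

lemma internal_direct_sum_zero:
  assumes "internal_direct_sum scale W I F" "J \<subseteq> I" "finite J"
    "\<And>i. i \<in> J \<Longrightarrow> w i \<in> F i" "(\<Sum>i\<in>J. w i) = 0" "i \<in> J"
  shows "w i = 0"
  using assms unfolding internal_direct_sum_def by blast

context vector_space
begin

lemma basis_of_exists: "\<exists>B. basis_of scale B W"
  unfolding basis_of_def using basis_exists by metis

lemma internal_direct_sum_inter:
  assumes ds: "internal_direct_sum scale W I F" and sub: "subspace (F j)"
    and ij: "i \<in> I" "j \<in> I" "i \<noteq> j" and x: "x \<in> F i" "x \<in> F j"
  shows "x = 0"
proof -
  let ?w = "\<lambda>k. if k = i then x else - x"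
  have "?w i = 0"
  proof (rule internal_direct_sum_zero[OF ds, of "{i, j}" ?w i])
    show "{i, j} \<subseteq> I" "finite {i, j}" "i \<in> {i, j}"
      using ij by auto
    show "?w k \<in> F k" if "k \<in> {i, j}" for k
      using that ij x subspace_neg[OF sub] by auto
    show "(\<Sum>k\<in>{i, j}. ?w k) = 0"
      using ij by simp
  qed
  then show ?thesis by simp
qed

lemma internal_direct_sum_independent_Union:
  assumes ds: "internal_direct_sum scale W I F"
    and sub: "\<And>i. i \<in> I \<Longrightarrow> subspace (F i)"
    and B: "\<And>i. i \<in> I \<Longrightarrow> B i \<subseteq> F i" "\<And>i. i \<in> I \<Longrightarrow> independent (B i)"
  shows "independent (\<Union>i\<in>I. B i)"
  unfolding independent_explicit_module
proof (intro allI impI)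
  fix t u v
  assume t: "finite t" "t \<subseteq> (\<Union>i\<in>I. B i)" and sum_t: "(\<Sum>b\<in>t. u b *s b) = 0" and v: "v \<in> t"
  obtain idx where idx: "\<And>b. b \<in> t \<Longrightarrow> idx b \<in> I \<and> b \<in> B (idx b)"
    using t(2) by (metis UN_E subsetD)
  define w where "w i = (\<Sum>b\<in>{b. b \<in> t \<and> idx b = i}. u b *s b)" for i
  have "w (idx v) = 0"
  proof (rule internal_direct_sum_zero[OF ds])
    show "idx ` t \<subseteq> I" "finite (idx ` t)" "idx v \<in> idx ` t"
      using idx t(1) v by auto
    show "w i \<in> F i" if "i \<in> idx ` t" for i
      unfolding w_def
    proof (rule subspace_sum)
      show "subspace (F i)"
        using that idx sub by blast
      fix b assume "b \<in> {b. b \<in> t \<and> idx b = i}"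
      then have "i \<in> I" "b \<in> F i"
        using idx[of b] B(1)[of i] by auto
      then show "u b *s b \<in> F i"
        by (intro subspace_scale sub)
    qed
    show "(\<Sum>i\<in>idx ` t. w i) = 0"
      unfolding w_def using sum.group[OF t(1) _ subset_refl, of idx "\<lambda>b. u b *s b"] t(1) sum_t by simp
  qed
  then have "(\<Sum>b\<in>{b. b \<in> t \<and> idx b = idx v}. u b *s b) = 0"
    unfolding w_def .
  moreover have "{b. b \<in> t \<and> idx b = idx v} \<subseteq> B (idx v)"
    using idx by (metis (mono_tags, lifting) mem_Collect_eq subsetI)
  moreover have "finite {b. b \<in> t \<and> idx b = idx v}" "v \<in> {b. b \<in> t \<and> idx b = idx v}"
    using t(1) v by simp_all
  ultimately show "u v = 0"
    using independentD[OF B(2)] idx[OF v] by blast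
qed

lemma basis_of_internal_direct_sum:
  assumes ds: "internal_direct_sum scale W I F"
    and sub: "\<And>i. i \<in> I \<Longrightarrow> subspace (F i)"
    and B: "\<And>i. i \<in> I \<Longrightarrow> basis_of scale (B i) (F i)"
  shows "basis_of scale (\<Union>i\<in>I. B i) W"
proof -
  have W: "W = span (\<Union>i\<in>I. F i)"
    by (rule internal_direct_sum_span[OF ds])
  have "(\<Union>i\<in>I. F i) \<subseteq> span (\<Union>i\<in>I. B i)"
  proof
    fix x assume "x \<in> (\<Union>i\<in>I. F i)"
    then obtain i where i: "i \<in> I" "x \<in> F i" by blast
    then have "x \<in> span (B i)"
      using B unfolding basis_of_def by blast
    moreover have "span (B i) \<subseteq> span (\<Union>i\<in>I. B i)"
      using i by (intro span_mono) blast
    ultimately show "x \<in> span (\<Union>i\<in>I. B i)" by blast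
  qed
  then have "W \<subseteq> span (\<Union>i\<in>I. B i)"
    unfolding W by (rule span_minimal) simp
  moreover have "(\<Union>i\<in>I. B i) \<subseteq> W"
    using B span_superset unfolding W basis_of_def by fastforce
  moreover have "independent (\<Union>i\<in>I. B i)"
    using internal_direct_sum_independent_Union[OF ds sub] B unfolding basis_of_def by blast
  ultimately show ?thesis
    unfolding basis_of_def by blast
qed

lemma internal_direct_sum_bases_disjoint:
  assumes ds: "internal_direct_sum scale W I F"
    and sub: "\<And>i. i \<in> I \<Longrightarrow> subspace (F i)"
    and B: "\<And>i. i \<in> I \<Longrightarrow> basis_of scale (B i) (F i)"
    and ij: "i \<in> I" "j \<in> I" "i \<noteq> j"
  shows "B i \<inter> B j = {}"
proof -
  have "b = 0" if "b \<in> B i" "b \<in> B j" for b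
    using internal_direct_sum_inter[OF ds sub[OF ij(2)] ij] that B[OF ij(1)] B[OF ij(2)]
    unfolding basis_of_def by blast
  then show ?thesis
    using B[OF ij(1)] dependent_zero unfolding basis_of_def by blast
qed

lemma bij_betw_representation_fin_maps:
  assumes X: "independent X"
  shows "bij_betw (representation X) (span X) (fin_maps X)"
proof (rule bij_betw_imageI)
  show "inj_on (representation X) (span X)"
  proof (rule inj_onI)
    fix x y assume x: "x \<in> span X" and y: "y \<in> span X"
      and eq: "representation X x = representation X y"
    have "x = (\<Sum>b | representation X x b \<noteq> 0. representation X x b *s b)"
      using sum_nonzero_representation_eq[OF X x] by simp
    also have "\<dots> = y"
      unfolding eq using sum_nonzero_representation_eq[OF X y] by simp
    finally show "x = y" .
  qed
  show "representation X ` span X = fin_maps X"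
  proof
    show "representation X ` span X \<subseteq> fin_maps X"
      unfolding fin_maps_def using representation_ne_zero finite_representation by blast
    show "fin_maps X \<subseteq> representation X ` span X"
    proof
      fix \<phi> :: "'b \<Rightarrow> 'a" assume "\<phi> \<in> fin_maps X"
      then have supp: "\<And>b. \<phi> b \<noteq> 0 \<Longrightarrow> b \<in> X" "finite {b. \<phi> b \<noteq> 0}"
        unfolding fin_maps_def by auto
      let ?x = "\<Sum>b | \<phi> b \<noteq> 0. \<phi> b *s b"
      have x: "?x \<in> span X"
        using supp by (intro span_sum span_scale span_base) auto
      then have "\<phi> = representation X ?x"
        by (rule representation_eqI[OF X _ supp refl, symmetric])
      from this x show "\<phi> \<in> representation X ` span X"
        by (rule image_eqI)
    qed
  qed
qed

lemma representation_partial_basis_injection: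
  assumes X: "independent X" and x: "x \<in> span X" and L: "module_hom scale scale L"
    and Q: "Q \<subseteq> X" "h ` Q \<subseteq> X" "inj_on h Q"
    and L_basis: "\<And>b. b \<in> X \<Longrightarrow> L b = (if b \<in> Q then h b else 0)"
  shows "representation X (L x) =
    (\<lambda>y. if y \<in> h ` Q then representation X x (the_inv_into Q h y) else 0)"
proof -
  define \<phi> where "\<phi> = representation X x"
  define F where "F = {b. \<phi> b \<noteq> 0}"
  have F: "finite F" "F \<subseteq> X"
    unfolding F_def \<phi>_def using finite_representation representation_ne_zero by auto
  have "L x = L (\<Sum>b\<in>F. \<phi> b *s b)"
    unfolding F_def \<phi>_def using sum_nonzero_representation_eq[OF X x] by simp
  also have "\<dots> = (\<Sum>b\<in>F. \<phi> b *s L b)"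
    by (simp add: module_hom.sum[OF L] module_hom.scale[OF L])
  also have "\<dots> = (\<Sum>b\<in>F. if b \<in> Q then \<phi> b *s h b else 0)"
    by (rule sum.cong) (use F L_basis in auto)
  also have "\<dots> = (\<Sum>b\<in>F \<inter> Q. \<phi> b *s h b)"
    using F(1) by (simp add: sum.If_cases Int_def)
  finally have Lx: "L x = (\<Sum>b\<in>F \<inter> Q. \<phi> b *s h b)" .
  define \<psi> where "\<psi> y = (if y \<in> h ` Q then \<phi> (the_inv_into Q h y) else 0)" for y
  have \<psi>_h: "\<psi> (h b) = \<phi> b" if "b \<in> Q" for b
    using that Q(3) by (simp add: \<psi>_def the_inv_into_f_f)
  have supp: "{y. \<psi> y \<noteq> 0} = h ` (F \<inter> Q)"
    unfolding \<psi>_def F_def using the_inv_into_f_f[OF Q(3)] by force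
  show ?thesis
    unfolding \<phi>_def[symmetric] \<psi>_def[symmetric]
  proof (rule representation_eqI[OF X])
    show "L x \<in> span X"
      unfolding Lx using Q(2) by (intro span_sum span_scale span_base) auto
    show "\<psi> b \<noteq> 0 \<Longrightarrow> b \<in> X" for b
      using supp Q(2) by blast
    show "finite {b. \<psi> b \<noteq> 0}"
      unfolding supp using F by simp
    have "(\<Sum>b | \<psi> b \<noteq> 0. \<psi> b *s b) = (\<Sum>b\<in>F \<inter> Q. \<psi> (h b) *s h b)"
      unfolding supp using inj_on_subset[OF Q(3), of "F \<inter> Q"] by (simp add: sum.reindex)
    then show "(\<Sum>b | \<psi> b \<noteq> 0. \<psi> b *s b) = L x"
      unfolding Lx using \<psi>_h by simp
  qed
qed

end

section \<open>Representations of ultragraph Leavitt path algebras\<close>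

locale lpa_representation =
  fixes G0 :: "'v set" and G1 :: "'e set" and r :: "'e \<Rightarrow> 'v set" and s :: "'e \<Rightarrow> 'v"
    and scale :: "'r::field \<Rightarrow> 'n::ab_group_add \<Rightarrow> 'n"
    and S Sa :: "'e \<Rightarrow> 'n \<Rightarrow> 'n" and P :: "'v set \<Rightarrow> 'n \<Rightarrow> 'n"
  assumes is_ultragraph: "ultragraph G0 G1 r s"
    and is_vector_space: "vector_space scale"
    and is_lpa_rep: "lpa_rep scale G0 G1 r s S Sa P"
begin

sublocale V: vector_space scale
  by (rule is_vector_space)

lemma source_in_G0: "e \<in> G1 \<Longrightarrow> s e \<in> G0"
  using is_ultragraph unfolding ultragraph_def by blast

lemma range_subset_G0: "e \<in> G1 \<Longrightarrow> r e \<subseteq> G0"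
  using is_ultragraph unfolding ultragraph_def by blast

lemma module_hom_S: "e \<in> G1 \<Longrightarrow> module_hom scale scale (S e)"
  and module_hom_Sa: "e \<in> G1 \<Longrightarrow> module_hom scale scale (Sa e)"
  and module_hom_P: "A \<in> gen0 G0 G1 r \<Longrightarrow> module_hom scale scale (P A)"
  using is_lpa_rep module_hom_iff_linear unfolding lpa_rep_def by blast+

lemma P_empty: "P {} x = 0"
  using is_lpa_rep unfolding lpa_rep_def by simp

lemma P_P:
  assumes "A \<in> gen0 G0 G1 r" "B \<in> gen0 G0 G1 r"
  shows "P A (P B x) = P (A \<inter> B) x"
proof -
  have "P A \<circ> P B = P (A \<inter> B)"
    using is_lpa_rep assms unfolding lpa_rep_def by blast
  then show ?thesis by (metis comp_apply)
qed

lemma P_Un: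
  "A \<in> gen0 G0 G1 r \<Longrightarrow> B \<in> gen0 G0 G1 r \<Longrightarrow> P (A \<union> B) x = P A x + P B x - P (A \<inter> B) x"
  using is_lpa_rep unfolding lpa_rep_def by blast

lemma
  assumes "e \<in> G1"
  shows P_source_S: "P {s e} (S e x) = S e x"
    and S_P_range: "S e (P (r e) x) = S e x"
    and P_range_Sa: "P (r e) (Sa e x) = Sa e x"
    and Sa_P_source: "Sa e (P {s e} x) = Sa e x"
proof -
  have "P {s e} \<circ> S e = S e \<and> S e \<circ> P (r e) = S e \<and>
      P (r e) \<circ> Sa e = Sa e \<and> Sa e \<circ> P {s e} = Sa e"
    using is_lpa_rep assms unfolding lpa_rep_def by blast
  then show "P {s e} (S e x) = S e x" "S e (P (r e) x) = S e x"
    "P (r e) (Sa e x) = Sa e x" "Sa e (P {s e} x) = Sa e x"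
    by (metis comp_apply)+
qed

lemma Sa_S:
  assumes "e \<in> G1" "f \<in> G1"
  shows "Sa e (S f x) = (if e = f then P (r e) x else 0)"
proof -
  have "Sa e \<circ> S f = (if e = f then P (r e) else (\<lambda>x. 0))"
    using is_lpa_rep assms unfolding lpa_rep_def by blast
  then show ?thesis by (metis comp_apply)
qed

lemma P_vertex_orthogonal:
  "v \<in> G0 \<Longrightarrow> w \<in> G0 \<Longrightarrow> v \<noteq> w \<Longrightarrow> P {v} (P {w} x) = 0"
  using P_P[OF gen0.vert gen0.vert] P_empty by simp

lemma P_fixes_range: "A \<in> gen0 G0 G1 r \<Longrightarrow> z \<in> range (P A) \<Longrightarrow> P A z = z"
  using P_P by auto

lemma subspace_range: "module_hom scale scale f \<Longrightarrow> V.subspace (range f)"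
  using module_hom.subspace_image V.subspace_UNIV by blast

lemma subspace_range_vertex: "v \<in> G0 \<Longrightarrow> V.subspace (range (P {v}))"
  by (intro subspace_range module_hom_P gen0.vert)

lemma S_inj_on_range: "e \<in> G1 \<Longrightarrow> inj_on (S e) (range (P (r e)))"
  by (rule inj_onI) (metis Sa_S P_fixes_range gen0.rng)

lemma range_S_Sa:
  assumes e: "e \<in> G1"
  shows "range (S e \<circ> Sa e) = S e ` range (P (r e))"
proof
  show "range (S e \<circ> Sa e) \<subseteq> S e ` range (P (r e))"
    using P_range_Sa[OF e] by (metis comp_apply image_mono image_subset_iff rangeI subset_UNIV)
  have "S e (P (r e) y) = (S e \<circ> Sa e) (S e y)" for y
    using Sa_S[OF e e] by simp
  then show "S e ` range (P (r e)) \<subseteq> range (S e \<circ> Sa e)"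
    by auto
qed

end

locale decomposed_representation = lpa_representation G0 G1 r s scale S Sa P
  for G0 :: "'v set" and G1 :: "'e set" and r :: "'e \<Rightarrow> 'v set" and s :: "'e \<Rightarrow> 'v"
    and scale :: "'r::field \<Rightarrow> 'n::ab_group_add \<Rightarrow> 'n"
    and S Sa :: "'e \<Rightarrow> 'n \<Rightarrow> 'n" and P :: "'v set \<Rightarrow> 'n \<Rightarrow> 'n" +
  assumes range_direct_sum:
      "\<forall>e\<in>G1. internal_direct_sum scale (range (P (r e))) (r e) (\<lambda>v. range (P {v}))"
    and source_direct_sum: "\<forall>v\<in>G0. s -` {v} \<inter> G1 \<noteq> {} \<longrightarrow>
        internal_direct_sum scale (range (P {v})) {e\<in>G1. s e = v} (\<lambda>e. range (S e \<circ> Sa e))"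
    and no_infinite_paths: "wf (edge_successor G1 r s)"
begin

definition sink :: "'v \<Rightarrow> bool" where
  "sink v \<longleftrightarrow> (\<forall>e\<in>G1. s e \<noteq> v)"

definition sink_basis :: "'v \<Rightarrow> 'n set" where
  "sink_basis v = (SOME B. basis_of scale B (range (P {v})))"

lemma basis_of_sink_basis: "basis_of scale (sink_basis v) (range (P {v}))"
  unfolding sink_basis_def using V.basis_of_exists by (rule someI_ex)

text \<open>These vectors form the set \<open>X\<close> of the
  branching system.\<close>
inductive_set basis_vectors :: "('v \<times> 'n) set" where
  at_sink: "v \<in> G0 \<Longrightarrow> sink v \<Longrightarrow> b \<in> sink_basis v \<Longrightarrow> (v, b) \<in> basis_vectors"
| along_edge: "e \<in> G1 \<Longrightarrow> w \<in> r e \<Longrightarrow> (w, b) \<in> basis_vectors \<Longrightarrow> (s e, S e b) \<in> basis_vectors"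

definition basis_at :: "'v \<Rightarrow> 'n set" where
  "basis_at v = {b. (v, b) \<in> basis_vectors}"

definition basis_over :: "'v set \<Rightarrow> 'n set" where
  "basis_over A = (\<Union>v\<in>A. basis_at v)"

lemma basis_at_vertex: "b \<in> basis_at v \<Longrightarrow> v \<in> G0"
  unfolding basis_at_def by (auto elim: basis_vectors.cases simp: source_in_G0)

lemma basis_at_sink:
  assumes "sink v" "v \<in> G0"
  shows "basis_at v = sink_basis v"
proof
  show "basis_at v \<subseteq> sink_basis v"
    using assms(1) unfolding basis_at_def sink_def by (auto elim: basis_vectors.cases)
  show "sink_basis v \<subseteq> basis_at v"
    using assms unfolding basis_at_def by (auto intro: basis_vectors.at_sink)
qed

lemma basis_at_nonsink:
  assumes "\<not> sink v"
  shows "basis_at v = (\<Union>e\<in>{e\<in>G1. s e = v}. S e ` basis_over (r e))"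
proof
  show "basis_at v \<subseteq> (\<Union>e\<in>{e\<in>G1. s e = v}. S e ` basis_over (r e))"
  proof
    fix b assume "b \<in> basis_at v"
    then have "(v, b) \<in> basis_vectors"
      unfolding basis_at_def by simp
    then show "b \<in> (\<Union>e\<in>{e\<in>G1. s e = v}. S e ` basis_over (r e))"
    proof cases
      case at_sink
      with assms show ?thesis by simp
    next
      case (along_edge e w b')
      then show ?thesis
        unfolding basis_over_def basis_at_def by blast
    qed
  qed
  show "(\<Union>e\<in>{e\<in>G1. s e = v}. S e ` basis_over (r e)) \<subseteq> basis_at v"
    unfolding basis_over_def basis_at_def by (auto intro: basis_vectors.along_edge)
qed

lemma S_image_subset_basis_at: "e \<in> G1 \<Longrightarrow> S e ` basis_over (r e) \<subseteq> basis_at (s e)"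
  unfolding basis_at_def basis_over_def by (auto intro: basis_vectors.along_edge)

lemma basis_over_range:
  assumes e: "e \<in> G1"
    and bases: "\<And>w. w \<in> r e \<Longrightarrow> basis_of scale (basis_at w) (range (P {w}))"
  shows "basis_of scale (basis_over (r e)) (range (P (r e)))"
proof -
  have ds: "internal_direct_sum scale (range (P (r e))) (r e) (\<lambda>v. range (P {v}))"
    using range_direct_sum e by blast
  have sub: "V.subspace (range (P {w}))" if "w \<in> r e" for w
    using subspace_range_vertex range_subset_G0[OF e] that by blast
  show ?thesis
    unfolding basis_over_def by (rule V.basis_of_internal_direct_sum[OF ds sub bases])
qed

lemma S_image_basis:
  assumes e: "e \<in> G1"
    and bases: "\<And>w. w \<in> r e \<Longrightarrow> basis_of scale (basis_at w) (range (P {w}))"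
  shows "basis_of scale (S e ` basis_over (r e)) (range (S e \<circ> Sa e))"
proof -
  have B: "basis_over (r e) \<subseteq> range (P (r e))" "V.independent (basis_over (r e))"
      "range (P (r e)) \<subseteq> V.span (basis_over (r e))"
    using basis_over_range[OF e bases] unfolding basis_of_def by blast+
  have "V.span (basis_over (r e)) \<subseteq> range (P (r e))"
    using V.span_minimal[OF B(1) subspace_range[OF module_hom_P[OF gen0.rng[OF e]]]] .
  then have "V.independent (S e ` basis_over (r e))"
    using module_hom.independent_injective_image[OF module_hom_S[OF e] B(2)]
      inj_on_subset[OF S_inj_on_range[OF e]] by blast
  moreover have "S e ` basis_over (r e) \<subseteq> range (S e \<circ> Sa e)"
    using B(1) range_S_Sa[OF e] by blast
  moreover have "range (S e \<circ> Sa e) \<subseteq> V.span (S e ` basis_over (r e))"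
    using range_S_Sa[OF e] B(3) module_hom.span_image[OF module_hom_S[OF e]] by auto
  ultimately show ?thesis
    unfolding basis_of_def by blast
qed

lemma source_direct_sum_nonsink:
  "v \<in> G0 \<Longrightarrow> \<not> sink v \<Longrightarrow>
    internal_direct_sum scale (range (P {v})) {e\<in>G1. s e = v} (\<lambda>e. range (S e \<circ> Sa e))"
  using source_direct_sum unfolding sink_def by blast

lemma subspace_range_S_Sa: "e \<in> G1 \<Longrightarrow> V.subspace (range (S e \<circ> Sa e))"
  using subspace_range module_hom_compose module_hom_S module_hom_Sa by blast

lemma basis_at_nonsink_basis:
  assumes v: "v \<in> G0" "\<not> sink v"
    and bases: "\<And>e w. e \<in> G1 \<Longrightarrow> s e = v \<Longrightarrow> w \<in> r e \<Longrightarrow>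
      basis_of scale (basis_at w) (range (P {w}))"
  shows "basis_of scale (basis_at v) (range (P {v}))"
  unfolding basis_at_nonsink[OF v(2)]
proof (rule V.basis_of_internal_direct_sum[OF source_direct_sum_nonsink[OF v]])
  fix e assume e: "e \<in> {e\<in>G1. s e = v}"
  then show "V.subspace (range (S e \<circ> Sa e))"
    using subspace_range_S_Sa by blast
  show "basis_of scale (S e ` basis_over (r e)) (range (S e \<circ> Sa e))"
    using e by (intro S_image_basis bases) auto
qed

lemma basis_at_range_vertex:
  assumes "e \<in> G1" "w \<in> r e"
  shows "basis_of scale (basis_at w) (range (P {w}))"
  using no_infinite_paths assms
proof (induction e arbitrary: w rule: wf_induct_rule)
  case (less e)
  then have w: "w \<in> G0"
    using range_subset_G0 by blast
  show ?case
  proof (cases "sink w")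
    case True
    then show ?thesis
      using basis_of_sink_basis basis_at_sink w by simp
  next
    case False
    show ?thesis
    proof (rule basis_at_nonsink_basis[OF w False])
      fix f u assume "f \<in> G1" "s f = w" "u \<in> r f"
      then show "basis_of scale (basis_at u) (range (P {u}))"
        using less by (auto simp: edge_successor_def)
    qed
  qed
qed

lemma basis_at_basis: "v \<in> G0 \<Longrightarrow> basis_of scale (basis_at v) (range (P {v}))"
  using basis_of_sink_basis basis_at_sink basis_at_nonsink_basis basis_at_range_vertex
  by (cases "sink v") simp_all

lemma S_images_disjoint:
  assumes ef: "e \<in> G1" "f \<in> G1" "e \<noteq> f" "s e = s f"
  shows "S e ` basis_over (r e) \<inter> S f ` basis_over (r f) = {}"
proof -
  have v: "s e \<in> G0" "\<not> sink (s e)"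
    using ef(1) source_in_G0 unfolding sink_def by blast+
  show ?thesis
  proof (rule V.internal_direct_sum_bases_disjoint[OF source_direct_sum_nonsink[OF v],
        of "\<lambda>e. S e ` basis_over (r e)"])
    show "V.subspace (range (S g \<circ> Sa g))" if "g \<in> {g\<in>G1. s g = s e}" for g
      using that subspace_range_S_Sa by blast
    show "basis_of scale (S g ` basis_over (r g)) (range (S g \<circ> Sa g))"
      if "g \<in> {g\<in>G1. s g = s e}" for g
      using that by (intro S_image_basis basis_at_range_vertex) auto
  qed (use ef in auto)
qed

section \<open>The coordinate isomorphism\<close>

abbreviation M :: "'n set" where
  "M \<equiv> rep_module scale G0 G1 r S Sa P"

lemma P_in_span_vertex_spaces:
  "A \<in> gen0 G0 G1 r \<Longrightarrow> P A x \<in> V.span (\<Union>v\<in>G0. range (P {v}))"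
proof (induction A arbitrary: x rule: gen0.induct)
  case empty
  then show ?case using P_empty V.span_zero by simp
next
  case (vert v)
  then show ?case by (intro V.span_base) blast
next
  case (rng e)
  have "range (P (r e)) = V.span (\<Union>v\<in>r e. range (P {v}))"
    using range_direct_sum rng internal_direct_sum_span by blast
  also have "\<dots> \<subseteq> V.span (\<Union>v\<in>G0. range (P {v}))"
    using range_subset_G0[OF rng] by (intro V.span_mono) blast
  finally show ?case by blast
next
  case (un A B)
  then show ?case
    using P_Un[OF un.hyps] P_P[OF un.hyps] V.span_add V.span_diff by metis
next
  case (int A B)
  then show ?case
    using P_P[OF int.hyps] by metis
qed

lemma rep_image_in_span_vertex_spaces:
  "a \<in> rep_image scale G0 G1 r S Sa P \<Longrightarrow> a x \<in> V.span (\<Union>v\<in>G0. range (P {v}))"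
proof (induction a arbitrary: x rule: rep_image.induct)
  case (gen_s e)
  then show ?case
    using P_in_span_vertex_spaces[OF gen0.vert[OF source_in_G0[OF gen_s]], of "S e x"]
      P_source_S[OF gen_s] by simp
next
  case (gen_sa e)
  then show ?case
    using P_in_span_vertex_spaces[OF gen0.rng[OF gen_sa], of "Sa e x"] P_range_Sa[OF gen_sa] by simp
next
  case (gen_p A)
  then show ?case by (rule P_in_span_vertex_spaces)
next
  case (comp a b)
  then show ?case by simp
next
  case (add a b)
  then show ?case using V.span_add by simp
next
  case (smult a c)
  then show ?case using V.span_scale by simp
qed

lemma rep_module_eq_span_vertex_spaces: "M = V.span (\<Union>v\<in>G0. range (P {v}))"
proof
  show "M \<subseteq> V.span (\<Union>v\<in>G0. range (P {v}))"
    unfolding rep_module_def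
    using rep_image_in_span_vertex_spaces by (intro V.span_minimal) auto
  have "P {v} \<in> rep_image scale G0 G1 r S Sa P" if "v \<in> G0" for v
    using that by (intro rep_image.gen_p gen0.vert)
  then have "(\<Union>v\<in>G0. range (P {v})) \<subseteq> {a x |a x. a \<in> rep_image scale G0 G1 r S Sa P}"
    by blast
  then show "V.span (\<Union>v\<in>G0. range (P {v})) \<subseteq> M"
    unfolding rep_module_def by (rule V.span_mono)
qed

text \<open>The projections \<open>P {v}\<close> are mutually orthogonal idempotents, which separates the summands.\<close>
lemma rep_module_direct_sum: "internal_direct_sum scale M G0 (\<lambda>v. range (P {v}))"
  unfolding internal_direct_sum_def
proof (intro conjI allI impI ballI)
  show "M = V.span (\<Union>v\<in>G0. range (P {v}))"
    by (rule rep_module_eq_span_vertex_spaces)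
  fix J w j
  assume J: "J \<subseteq> G0" "finite J" and w: "\<forall>i\<in>J. w i \<in> range (P {i})"
    and sum_J: "sum w J = 0" and j: "j \<in> J"
  have vj: "{j} \<in> gen0 G0 G1 r"
    using J j by (intro gen0.vert) blast
  have "P {j} (w i) = (if i = j then w j else 0)" if i: "i \<in> J" for i
  proof (cases "i = j")
    case True
    have "w j \<in> range (P {j})"
      using w j by blast
    from P_fixes_range[OF vj this] True show ?thesis
      by simp
  next
    case False
    obtain y where "w i = P {i} y"
      using w i by blast
    then show ?thesis
      using P_vertex_orthogonal False J i j by auto
  qed
  then have "(\<Sum>i\<in>J. P {j} (w i)) = w j"
    using J(2) j by (simp add: sum.If_cases)
  then have "P {j} (sum w J) = w j"
    using module_hom.sum[OF module_hom_P[OF vj]] by metis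
  then show "w j = 0"
    using sum_J module_hom.zero[OF module_hom_P[OF vj]] by simp
qed

lemma basis_of_rep_module: "basis_of scale (basis_over G0) M"
  unfolding basis_over_def
  by (rule V.basis_of_internal_direct_sum[OF rep_module_direct_sum subspace_range_vertex basis_at_basis])

lemma rep_module_eq_span_basis: "M = V.span (basis_over G0)"
proof
  show "M \<subseteq> V.span (basis_over G0)"
    using basis_of_rep_module unfolding basis_of_def by blast
  have "basis_over G0 \<subseteq> M"
    using basis_of_rep_module unfolding basis_of_def by blast
  then show "V.span (basis_over G0) \<subseteq> M"
    unfolding rep_module_def by (rule V.span_minimal[OF _ V.subspace_span])
qed

lemma basis_at_disjoint:
  assumes "v \<noteq> w"
  shows "basis_at v \<inter> basis_at w = {}"
proof (cases "v \<in> G0 \<and> w \<in> G0")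
  case True
  then show ?thesis
    using V.internal_direct_sum_bases_disjoint[OF rep_module_direct_sum subspace_range_vertex
        basis_at_basis] assms by blast
qed (use basis_at_vertex in blast)

lemma basis_over_subset: "basis_over A \<subseteq> basis_over G0"
  unfolding basis_over_def using basis_at_vertex by blast

lemma basis_over_Int: "basis_over A \<inter> basis_over B = basis_over (A \<inter> B)"
proof
  show "basis_over A \<inter> basis_over B \<subseteq> basis_over (A \<inter> B)"
  proof
    fix b assume "b \<in> basis_over A \<inter> basis_over B"
    then obtain v w where "v \<in> A" "w \<in> B" "b \<in> basis_at v" "b \<in> basis_at w"
      unfolding basis_over_def by blast
    then show "b \<in> basis_over (A \<inter> B)"
      using basis_at_disjoint[of v w] unfolding basis_over_def by (cases "v = w") auto
  qed
qed (auto simp: basis_over_def)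

lemma basis_over_Un: "basis_over A \<union> basis_over B = basis_over (A \<union> B)"
  unfolding basis_over_def by blast

lemma P_on_basis:
  assumes b: "b \<in> basis_over G0" and A: "A \<in> gen0 G0 G1 r"
  shows "P A b = (if b \<in> basis_over A then b else 0)"
proof -
  obtain v where v: "v \<in> G0" "b \<in> basis_at v"
    using b unfolding basis_over_def by blast
  then obtain y where y: "b = P {v} y"
    using basis_at_basis unfolding basis_of_def by blast
  have "P A b = P (A \<inter> {v}) y"
    using P_P[OF A gen0.vert[OF v(1)]] y by simp
  moreover have "b \<in> basis_over A \<longleftrightarrow> v \<in> A"
  proof
    assume "b \<in> basis_over A"
    then obtain w where "w \<in> A" "b \<in> basis_at w"
      unfolding basis_over_def by blast
    then show "v \<in> A"
      using v(2) basis_at_disjoint[of v w] by (cases "v = w") auto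
  qed (use v in \<open>auto simp: basis_over_def\<close>)
  ultimately show ?thesis
    using y P_empty by (cases "v \<in> A") (auto simp: Int_absorb1)
qed

lemma basis_over_range_subset: "e \<in> G1 \<Longrightarrow> basis_over (r e) \<subseteq> range (P (r e))"
  using basis_over_range basis_at_range_vertex unfolding basis_of_def by blast

lemma inj_on_S_basis_over: "e \<in> G1 \<Longrightarrow> inj_on (S e) (basis_over (r e))"
  using inj_on_subset[OF S_inj_on_range basis_over_range_subset] .

lemma S_on_basis:
  assumes e: "e \<in> G1" and b: "b \<in> basis_over G0"
  shows "S e b = (if b \<in> basis_over (r e) then S e b else 0)"
  using S_P_range[OF e, of b] P_on_basis[OF b gen0.rng[OF e]] module_hom.zero[OF module_hom_S[OF e]]
  by (auto split: if_splits)

lemma Sa_on_basis: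
  assumes e: "e \<in> G1" and b: "b \<in> basis_over G0"
  shows "Sa e b =
    (if b \<in> S e ` basis_over (r e) then the_inv_into (basis_over (r e)) (S e) b else 0)"
proof (cases "b \<in> basis_at (s e)")
  case False
  then have "P {s e} b = 0"
    using P_on_basis[OF b gen0.vert[OF source_in_G0[OF e]]] by (simp add: basis_over_def)
  then have "Sa e b = 0"
    using Sa_P_source[OF e, of b] module_hom.zero[OF module_hom_Sa[OF e]] by simp
  moreover have "b \<notin> S e ` basis_over (r e)"
    using False S_image_subset_basis_at[OF e] by blast
  ultimately show ?thesis
    by simp
next
  case True
  have "\<not> sink (s e)"
    using e unfolding sink_def by blast
  then obtain f c where f: "f \<in> G1" "s f = s e" and c: "c \<in> basis_over (r f)" "b = S f c"
    using True basis_at_nonsink by blast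
  show ?thesis
  proof (cases "f = e")
    case True
    have "c \<in> range (P (r e))"
      using c(1) basis_over_range_subset[OF e] True by blast
    then have "P (r e) c = c"
      by (rule P_fixes_range[OF gen0.rng[OF e]])
    then have "Sa e b = c"
      using Sa_S[OF e e, of c] c(2) True by simp
    moreover have "the_inv_into (basis_over (r e)) (S e) b = c"
      using the_inv_into_f_f[OF inj_on_S_basis_over[OF e]] c True by simp
    ultimately show ?thesis
      using c True by simp
  next
    case False
    then have "S e ` basis_over (r e) \<inter> S f ` basis_over (r f) = {}"
      using S_images_disjoint[OF e f(1)] f(2) by simp
    then have "b \<notin> S e ` basis_over (r e)"
      using c by blast
    moreover have "Sa e b = 0"
      using Sa_S[OF e f(1), of c] False c(2) by simp
    ultimately show ?thesis
      by simp
  qed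
qed

lemma branching_system_basis_over:
  "branching_system G0 G1 r s (basis_over G0) (\<lambda>e. S e ` basis_over (r e)) basis_over S"
  unfolding branching_system_def
proof (intro conjI ballI impI allI)
  fix e assume e: "e \<in> G1"
  show "S e ` basis_over (r e) \<subseteq> basis_over {s e}"
    using S_image_subset_basis_at[OF e] unfolding basis_over_def by simp
  then show "S e ` basis_over (r e) \<subseteq> basis_over G0"
    using basis_over_subset by blast
  show "bij_betw (S e) (basis_over (r e)) (S e ` basis_over (r e))"
    using inj_on_S_basis_over[OF e] by (simp add: bij_betw_def)
  fix f assume "f \<in> G1" "e \<noteq> f"
  then show "S e ` basis_over (r e) \<inter> S f ` basis_over (r f) = {}"
    using S_images_disjoint[OF e] S_image_subset_basis_at[OF e] S_image_subset_basis_at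
      basis_at_disjoint[of "s e" "s f"] by (cases "s e = s f") blast+
next
  fix v assume "0 < card {e \<in> G1. s e = v}"
  then have "\<not> sink v"
    unfolding sink_def by (metis (mono_tags, lifting) card.empty empty_Collect_eq less_irrefl)
  then show "basis_over {v} = (\<Union>e\<in>{e \<in> G1. s e = v}. S e ` basis_over (r e))"
    using basis_at_nonsink unfolding basis_over_def by simp
qed (simp_all add: basis_over_subset basis_over_Int basis_over_Un basis_over_def[of "{}"])

abbreviation coordinates :: "'n \<Rightarrow> 'n \<Rightarrow> 'r" where
  "coordinates \<equiv> V.representation (basis_over G0)"

lemma independent_basis_over: "V.independent (basis_over G0)"
  using basis_of_rep_module unfolding basis_of_def by blast

lemma coordinates_S:
  assumes e: "e \<in> G1" and x: "x \<in> M"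
  shows "coordinates (S e x) = ind_s (\<lambda>e. S e ` basis_over (r e)) basis_over r S e (coordinates x)"
  unfolding ind_s_def
  by (rule V.representation_partial_basis_injection[OF independent_basis_over
        x[unfolded rep_module_eq_span_basis] module_hom_S[OF e] basis_over_subset _
        inj_on_S_basis_over[OF e] S_on_basis[OF e]])
    (use branching_system_basis_over e in \<open>auto simp: branching_system_def\<close>)

lemma coordinates_Sa:
  assumes e: "e \<in> G1" and x: "x \<in> M"
  shows "coordinates (Sa e x) = ind_sa basis_over r S e (coordinates x)"
proof -
  let ?h = "the_inv_into (basis_over (r e)) (S e)"
  have h: "inj_on ?h (S e ` basis_over (r e))" "?h ` S e ` basis_over (r e) = basis_over (r e)"
    using inj_on_the_inv_into[OF inj_on_S_basis_over[OF e]]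
      the_inv_into_f_f[OF inj_on_S_basis_over[OF e]] by force+
  have "coordinates (Sa e x) = (\<lambda>y. if y \<in> basis_over (r e)
      then coordinates x (the_inv_into (S e ` basis_over (r e)) ?h y) else 0)"
    using V.representation_partial_basis_injection[OF independent_basis_over
        x[unfolded rep_module_eq_span_basis] module_hom_Sa[OF e] _ _ h(1) Sa_on_basis[OF e]]
      h(2) basis_over_subset branching_system_basis_over e
    unfolding branching_system_def by auto
  also have "\<dots> = ind_sa basis_over r S e (coordinates x)"
  proof -
    have "the_inv_into (S e ` basis_over (r e)) ?h y = S e y" if "y \<in> basis_over (r e)" for y
      using the_inv_into_f_eq[OF h(1) the_inv_into_f_f[OF inj_on_S_basis_over[OF e] that]] that
      by blast
    then show ?thesis
      unfolding ind_sa_def by auto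
  qed
  finally show ?thesis .
qed

lemma coordinates_P:
  assumes A: "A \<in> gen0 G0 G1 r" and x: "x \<in> M"
  shows "coordinates (P A x) = ind_p basis_over A (coordinates x)"
proof -
  have "coordinates (P A x) = (\<lambda>y. if y \<in> (\<lambda>z. z) ` basis_over A
      then coordinates x (the_inv_into (basis_over A) (\<lambda>z. z) y) else 0)"
    by (rule V.representation_partial_basis_injection[OF independent_basis_over
          x[unfolded rep_module_eq_span_basis] module_hom_P[OF A] basis_over_subset _ inj_on_id2])
      (use basis_over_subset P_on_basis[OF _ A] in auto)
  then show ?thesis
    unfolding ind_p_def by (auto simp: the_inv_into_f_f[OF inj_on_id2])
qed

end

theorem mainTheorem10:
  fixes G0 :: "'v set" and G1 :: "'e set" and r :: "'e \<Rightarrow> 'v set" and s :: "'e \<Rightarrow> 'v"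
    and scale :: "'r::field \<Rightarrow> 'n::ab_group_add \<Rightarrow> 'n"
    and S Sa :: "'e \<Rightarrow> 'n \<Rightarrow> 'n" and P :: "'v set \<Rightarrow> 'n \<Rightarrow> 'n"
    and n :: nat
  assumes ug: "ultragraph G0 G1 r s"
    and n1: "n \<ge> 1"
    and Xne: "\<forall>i\<in>{1..n}. Xk G0 G1 r s i \<noteq> {}"
    and cover: "(\<Union>e\<in>G1. r e) \<union> s ` G1 = (\<Union>i\<in>{1..n}. \<Union>(Xk G0 G1 r s i) \<union> Ik G0 G1 r s i)"
    and vs: "vector_space scale"
    and rep: "lpa_rep scale G0 G1 r s S Sa P"
    and range_sum: "\<forall>e\<in>G1. internal_direct_sum scale (range (P (r e))) (r e) (\<lambda>v. range (P {v}))"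
    and source_sum: "\<forall>v\<in>G0. s -` {v} \<inter> G1 \<noteq> {} \<longrightarrow>
        internal_direct_sum scale (range (P {v})) {e\<in>G1. s e = v} (\<lambda>e. range (S e \<circ> Sa e))"
  shows "\<exists>(X :: 'n set) Rg D f (T :: 'n \<Rightarrow> 'n \<Rightarrow> 'r).
     branching_system G0 G1 r s X Rg D f \<and>
     bij_betw T (rep_module scale G0 G1 r S Sa P) (fin_maps X) \<and>
     (\<forall>x\<in>rep_module scale G0 G1 r S Sa P. \<forall>y\<in>rep_module scale G0 G1 r S Sa P.
        T (x + y) = (\<lambda>z. T x z + T y z)) \<and>
     (\<forall>c. \<forall>x\<in>rep_module scale G0 G1 r S Sa P. T (scale c x) = (\<lambda>z. c * T x z)) \<and>
     (\<forall>e\<in>G1. \<forall>x\<in>rep_module scale G0 G1 r S Sa P.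
        T (S e x) = ind_s Rg D r f e (T x) \<and> T (Sa e x) = ind_sa D r f e (T x)) \<and>
     (\<forall>A\<in>gen0 G0 G1 r. \<forall>x\<in>rep_module scale G0 G1 r S Sa P. T (P A x) = ind_p D A (T x))"
proof -
  have "wf (edge_successor G1 r s)"
    using stage_edges_empty_if_cover[OF cover] by (rule wf_edge_successor)
  then interpret decomposed_representation G0 G1 r s scale S Sa P
    using ug vs rep range_sum source_sum
    by (intro decomposed_representation.intro lpa_representation.intro
        decomposed_representation_axioms.intro)
  have M: "rep_module scale G0 G1 r S Sa P = V.span (basis_over G0)"
    by (rule rep_module_eq_span_basis)
  show ?thesis
  proof (intro exI conjI)
    show "branching_system G0 G1 r s (basis_over G0) (\<lambda>e. S e ` basis_over (r e)) basis_over S"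
      by (rule branching_system_basis_over)
    show "bij_betw coordinates M (fin_maps (basis_over G0))"
      unfolding M by (rule V.bij_betw_representation_fin_maps[OF independent_basis_over])
    show "\<forall>x\<in>M. \<forall>y\<in>M. coordinates (x + y) = (\<lambda>z. coordinates x z + coordinates y z)"
      unfolding M using V.representation_add[OF independent_basis_over] by blast
    show "\<forall>c. \<forall>x\<in>M. coordinates (scale c x) = (\<lambda>z. c * coordinates x z)"
      unfolding M using V.representation_scale[OF independent_basis_over] by blast
    show "\<forall>e\<in>G1. \<forall>x\<in>M.
        coordinates (S e x) = ind_s (\<lambda>e. S e ` basis_over (r e)) basis_over r S e (coordinates x) \<and>
        coordinates (Sa e x) = ind_sa basis_over r S e (coordinates x)"
      using coordinates_S coordinates_Sa by blast
    show "\<forall>A\<in>gen0 G0 G1 r. \<forall>x\<in>M. coordinates (P A x) = ind_p basis_over A (coordinates x)"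
      using coordinates_P by blast
  qed
qed

end
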